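(* Let $A$ be an $n\times m$ complex matrix of rank $n$ with $n\le m$, let $b\in\mathbb C^n$, and let $X=\{x\in\mathbb C^m:Ax=b\}$. Then $\Sigma_X=\Sigma_X^\infty$. These sets are nonempty if and only if $\det(AA^\top)=0$, and in that case they equal the affine linear space $\{u\in\mathbb C^m:Au-b\in\mathrm{Im}(AA^\top)\}$, which has dimension $m-n+\mathrm{rank}(AA^\top)$.
   Context: For $x,y\in\mathbb C^m$, $x\cdot y=\sum x_iy_i$ (complex bilinear). For an irreducible variety $X\subseteq\mathbb C^m$ and $x\in X_{\mathrm{reg}}$, $N_xX$ is the span of gradients at $x$ of generators of the ideal of $X$ (for $X=\{Ax=b\}$ this is the row space of $A$, i.e. $\mathrm{Im}A^\top$). The ED correspondence $\mathcal E_X$ is the Zariski closure of $\{(x,u):x\in X_{\mathrm{reg}},\ u-x\in N_xX\}$ and $\mathcal E_X(u)=\{x:(x,u)\in\mathcal E_X\}$. The infinite ED discriminant is $\Sigma_X^\infty=\{u:\dim\mathcal E_X(u)\ge1\}$. The (affine) ED discriminant $\Sigma_X$ is the set of $u$ such that either $\mathcal E_X(u)$ has an isolated point $x$ of multiplicity at least $2$ (as a solution in $x$ of the equations of $\mathcal E_X$ with $u$ fixed), or $\mathcal E_X(u)$ is infinite. *)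

theory Defs
  imports "HOL-Analysis.Analysis" "HOL-Library.Extended_Nat"
begin

text \<open>Polynomial functions on an ambient space, generated (as a ring, over the
complex constants) by a given set of coordinate functions.\<close>
inductive_set poly_in :: "('a \<Rightarrow> complex) set \<Rightarrow> ('a \<Rightarrow> complex) set"
  for C :: "('a \<Rightarrow> complex) set" where
  const: "(\<lambda>_. c) \<in> poly_in C"
| coord: "f \<in> C \<Longrightarrow> f \<in> poly_in C"
| add: "f \<in> poly_in C \<Longrightarrow> g \<in> poly_in C \<Longrightarrow> (\<lambda>x. f x + g x) \<in> poly_in C"
| mult: "f \<in> poly_in C \<Longrightarrow> g \<in> poly_in C \<Longrightarrow> (\<lambda>x. f x * g x) \<in> poly_in C"

definition coords :: "(complex^'m \<Rightarrow> complex) set" where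
  "coords = {(\<lambda>x. x $ i) | i. True}"

definition coords2 :: "((complex^'m) \<times> (complex^'m) \<Rightarrow> complex) set" where
  "coords2 = {(\<lambda>p. fst p $ i) | i. True} \<union> {(\<lambda>p. snd p $ i) | i. True}"

definition zariski_closed :: "('a \<Rightarrow> complex) set \<Rightarrow> 'a set \<Rightarrow> bool" where
  "zariski_closed C S \<longleftrightarrow> (\<exists>P \<subseteq> poly_in C. S = {x. \<forall>p\<in>P. p x = 0})"

definition zariski_closure :: "('a \<Rightarrow> complex) set \<Rightarrow> 'a set \<Rightarrow> 'a set" where
  "zariski_closure C S = \<Inter> {T. zariski_closed C T \<and> S \<subseteq> T}"

definition zariski_irreducible :: "('a \<Rightarrow> complex) set \<Rightarrow> 'a set \<Rightarrow> bool" where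
  "zariski_irreducible C Z \<longleftrightarrow> Z \<noteq> {} \<and>
     (\<forall>Z1 Z2. zariski_closed C Z1 \<longrightarrow> zariski_closed C Z2 \<longrightarrow> Z = (Z \<inter> Z1) \<union> (Z \<inter> Z2)
        \<longrightarrow> Z \<subseteq> Z1 \<or> Z \<subseteq> Z2)"

text \<open>Dimension (topological Krull dimension in the Zariski topology) at least k:
  there is a chain Z_0 < Z_1 < ... < Z_k of irreducible Zariski-closed subsets of S.\<close>
definition zdim_ge :: "('a \<Rightarrow> complex) set \<Rightarrow> 'a set \<Rightarrow> nat \<Rightarrow> bool" where
  "zdim_ge C S k \<longleftrightarrow> (\<exists>Z :: nat \<Rightarrow> 'a set.
      (\<forall>i\<le>k. zariski_closed C (Z i) \<and> zariski_irreducible C (Z i) \<and> Z i \<subseteq> S) \<and>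
      (\<forall>i<k. Z i \<subset> Z (Suc i)))"

inductive_set ideal_gen :: "('a \<Rightarrow> complex) set \<Rightarrow> ('a \<Rightarrow> complex) set \<Rightarrow> ('a \<Rightarrow> complex) set"
  for C G where
  zero: "(\<lambda>_. 0) \<in> ideal_gen C G"
| gen: "g \<in> G \<Longrightarrow> h \<in> poly_in C \<Longrightarrow> (\<lambda>x. h x * g x) \<in> ideal_gen C G"
| add: "f \<in> ideal_gen C G \<Longrightarrow> g \<in> ideal_gen C G \<Longrightarrow> (\<lambda>x. f x + g x) \<in> ideal_gen C G"

definition max_ideal :: "('a \<Rightarrow> complex) set \<Rightarrow> 'a \<Rightarrow> ('a \<Rightarrow> complex) set" where
  "max_ideal C x = {f \<in> poly_in C. f x = 0}"

fun max_ideal_pow :: "('a \<Rightarrow> complex) set \<Rightarrow> 'a \<Rightarrow> nat \<Rightarrow> ('a \<Rightarrow> complex) set" where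
  "max_ideal_pow C x 0 = poly_in C"
| "max_ideal_pow C x (Suc k) =
     ideal_gen C {(\<lambda>y. f y * g y) | f g. f \<in> max_ideal C x \<and> g \<in> max_ideal_pow C x k}"

text \<open>Dimension of the complex vector space (poly_in C) / J.\<close>
definition quot_dim :: "('a \<Rightarrow> complex) set \<Rightarrow> ('a \<Rightarrow> complex) set \<Rightarrow> enat" where
  "quot_dim C J = Sup ((\<lambda>F. enat (card F)) `
     {F. finite F \<and> F \<subseteq> poly_in C \<and>
         (\<forall>c. (\<lambda>y. \<Sum>f\<in>F. c f * f y) \<in> J \<longrightarrow> (\<forall>f\<in>F. c f = 0))})"

text \<open>Multiplicity of a point x as a solution of the ideal I: the length of the
local ring O_x / I O_x, computed as the supremum over k of dim C[x]/(I + m_x^k).\<close>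
definition local_mult :: "('a \<Rightarrow> complex) set \<Rightarrow> ('a \<Rightarrow> complex) set \<Rightarrow> 'a \<Rightarrow> enat" where
  "local_mult C I x = (SUP k. quot_dim C {(\<lambda>y. f y + g y) | f g. f \<in> I \<and> g \<in> max_ideal_pow C x k})"

text \<open>For the affine linear space X = {x. A x = b} (A of full row rank), every point is
regular and N_x X = Im (A^T).\<close>
definition lin_var :: "complex^'m^'n \<Rightarrow> complex^'n \<Rightarrow> (complex^'m) set" where
  "lin_var A b = {x. A *v x = b}"

definition ED_corr :: "complex^'m^'n \<Rightarrow> complex^'n \<Rightarrow> ((complex^'m) \<times> (complex^'m)) set" where
  "ED_corr A b = zariski_closure coords2
     {(x, u). x \<in> lin_var A b \<and> u - x \<in> range (\<lambda>y. transpose A *v y)}"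

definition ED_fiber :: "complex^'m^'n \<Rightarrow> complex^'n \<Rightarrow> complex^'m \<Rightarrow> (complex^'m) set" where
  "ED_fiber A b u = {x. (x, u) \<in> ED_corr A b}"

definition ED_ideal_at :: "complex^'m^'n \<Rightarrow> complex^'n \<Rightarrow> complex^'m \<Rightarrow> (complex^'m \<Rightarrow> complex) set" where
  "ED_ideal_at A b u = {(\<lambda>x. p (x, u)) | p. p \<in> poly_in coords2 \<and> (\<forall>z\<in>ED_corr A b. p z = 0)}"

definition ED_disc_inf :: "complex^'m^'n \<Rightarrow> complex^'n \<Rightarrow> (complex^'m) set" where
  "ED_disc_inf A b = {u. zdim_ge coords (ED_fiber A b u) 1}"

definition ED_disc :: "complex^'m^'n \<Rightarrow> complex^'n \<Rightarrow> (complex^'m) set" where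
  "ED_disc A b = {u. (\<exists>x\<in>ED_fiber A b u. \<not> x islimpt ED_fiber A b u \<and>
                        local_mult coords (ED_ideal_at A b u) x \<ge> 2)
                    \<or> infinite (ED_fiber A b u)}"

end

theory Submission
  imports Defs
begin

text \<open>Write \<open>M = A A\<^sup>T\<close>. A pair \<open>(x, u)\<close> with \<open>A x = b\<close> and \<open>u = x + A\<^sup>T y\<close> satisfies
  \<open>A u - b = M y\<close>. If \<open>M\<close> is invertible, \<open>y\<close> and hence \<open>x\<close> are affine functions of \<open>u\<close>, so the
  ED correspondence is the graph of an affine map: every fibre is one reduced point and both
  discriminants are empty. If \<open>M\<close> is singular, the condition \<open>A u - b \<in> Im M\<close> is cut out by the
  linear equations coming from the left kernel of \<open>M\<close>, so it holds on the whole correspondence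
  and fibres over other \<open>u\<close> are empty. Over a \<open>u\<close> satisfying it, the fibre contains the line
  \<open>x + t A\<^sup>T y\<^sub>0\<close> for some \<open>0 \<noteq> y\<^sub>0 \<in> ker M\<close>, which is a genuine line because \<open>A\<^sup>T\<close> is injective.
  Hence both discriminants are this affine space, whose direction space is the preimage of
  \<open>Im M\<close> under the surjection \<open>A\<close>, of dimension \<open>(m - n) + rank M\<close>.\<close>

section \<open>Linear algebra over a field\<close>

declare transpose_matrix_vector [simp del]

definition dot :: "'a::comm_semiring_1^'n \<Rightarrow> 'a^'n \<Rightarrow> 'a" where
  "dot w v = (\<Sum>i\<in>UNIV. w $ i * v $ i)"

lemma dot_zero_left [simp]: "dot 0 v = 0"
  by (simp add: dot_def)

lemma dot_axis_right: "dot w (axis k 1) = w $ k"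
  by (simp add: dot_def axis_def if_distrib[of "\<lambda>x. _ * x"] cong: if_cong)

lemma dot_matrix_vector_mult:
  fixes N :: "'a::comm_semiring_1^'m^'k"
  shows "dot w (N *v y) = dot (transpose N *v w) y"
proof -
  have "dot w (N *v y) = (\<Sum>i\<in>UNIV. \<Sum>j\<in>UNIV. w $ i * N $ i $ j * y $ j)"
    by (simp add: dot_def matrix_vector_mult_def sum_distrib_left mult.assoc)
  also have "\<dots> = (\<Sum>j\<in>UNIV. \<Sum>i\<in>UNIV. w $ i * N $ i $ j * y $ j)"
    by (rule sum.swap)
  also have "\<dots> = dot (transpose N *v w) y"
    by (simp add: dot_def matrix_vector_mult_def transpose_def sum_distrib_left mult.commute mult.left_commute)
  finally show ?thesis .
qed

lemma separating_dot:
  fixes v :: "'a::field^'n"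
  assumes "v \<notin> vec.span S"
  obtains w where "\<And>s. s \<in> S \<Longrightarrow> dot w s = 0" and "dot w v = 1"
proof -
  obtain B where B: "B \<subseteq> S" "vec.independent B" "S \<subseteq> vec.span B"
    using vec.maximal_independent_subset by blast
  have "v \<notin> vec.span B"
    using assms B(1) vec.span_mono by blast
  then have indep: "vec.independent (insert v B)"
    using B(2) vec.independent_insertI by blast
  define F where "F = vec.construct (insert v B) (\<lambda>x. if x = v then vec 1 else 0 :: 'a^'n)"
  interpret F: Vector_Spaces.linear "(*s)" "(*s)" F
    unfolding F_def by (rule vec.linear_construct[OF indep])
  have F_v: "F v = vec 1"
    by (simp add: F_def vec.construct_basis[OF indep])
  have "F s = 0" if "s \<in> B" for s
  proof -
    have "s \<noteq> v"
      using that \<open>v \<notin> vec.span B\<close> vec.span_base by blast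
    then show ?thesis
      using that by (simp add: F_def vec.construct_basis[OF indep])
  qed
  then have F_S: "F s = 0" if "s \<in> S" for s
    using F.eq_0_on_span B(3) that by blast
  \<comment> \<open>\<open>F\<close> takes values in the line spanned by \<open>vec 1\<close>, so any one coordinate of it will do.\<close>
  obtain i :: 'n where True by blast
  define w where "w = (\<chi> j. F (axis j 1) $ i)"
  have F_dot: "F x $ i = dot w x" for x
    using linear_componentwise[OF F.linear_axioms, of x i] by (simp add: w_def dot_def mult.commute)
  show thesis
  proof (rule that)
    show "dot w s = 0" if "s \<in> S" for s
      using F_dot[of s] F_S[OF that] by simp
    show "dot w v = 1"
      using F_dot[of v] F_v by simp
  qed
qed

lemma range_matrix_vector_mult_eq:
  fixes N :: "'a::field^'m^'k"
  shows "range ((*v) N) = {v. \<forall>w. transpose N *v w = 0 \<longrightarrow> dot w v = 0}"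
proof (intro set_eqI iffI)
  fix v assume "v \<in> range ((*v) N)"
  then show "v \<in> {v. \<forall>w. transpose N *v w = 0 \<longrightarrow> dot w v = 0}"
    by (auto simp: dot_matrix_vector_mult)
next
  fix v assume v: "v \<in> {v. \<forall>w. transpose N *v w = 0 \<longrightarrow> dot w v = 0}"
  have span: "vec.span (range ((*v) N)) = range ((*v) N)"
    by (simp add: vec.subspace_image)
  show "v \<in> range ((*v) N)"
  proof (rule ccontr)
    assume "v \<notin> range ((*v) N)"
    then obtain w where w_range: "\<And>s. s \<in> range ((*v) N) \<Longrightarrow> dot w s = 0" and "dot w v = 1"
      using separating_dot[of v "range ((*v) N)"] span by auto
    have "transpose N *v w = 0"
      using w_range[OF rangeI, of "axis _ 1"] by (simp add: dot_matrix_vector_mult dot_axis_right vec_eq_iff)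
    then show False
      using v \<open>dot w v = 1\<close> by simp
  qed
qed

lemma vec_span_Diff_Int_span:
  fixes B :: "('a::field^'n) set"
  assumes "vec.independent B" and "K \<subseteq> B"
  shows "vec.span (B - K) \<inter> vec.span K = {0}"
proof -
  have "finite B"
    using assms(1) vec.finiteI_independent by blast
  have indep: "vec.independent (B - K)" "vec.independent K"
    using assms vec.independent_mono by blast+
  have "{x + y |x y. x \<in> vec.span (B - K) \<and> y \<in> vec.span K} = vec.span B"
    using assms(2) by (simp add: vec.span_Un[symmetric] Un_absorb2)
  then have "vec.dim (vec.span (B - K) \<inter> vec.span K) + card B = card (B - K) + card K"
    using vec.dim_sums_Int[of "vec.span (B - K)" "vec.span K"] assms(1) indep
    by (simp add: vec.dim_eq_card_independent)
  moreover have "card B = card (B - K) + card K"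
    using \<open>finite B\<close> assms(2) by (simp add: card_Diff_subset card_mono finite_subset)
  ultimately show ?thesis
    using vec.span_zero by auto
qed

lemma linear_image_span_Diff:
  fixes f :: "'a::field^'n \<Rightarrow> 'a^'k"
  assumes "Vector_Spaces.linear (*s) (*s) f" and "K \<subseteq> B" and "\<And>x. x \<in> K \<Longrightarrow> f x = 0"
  shows "f ` vec.span B = f ` vec.span (B - K)"
proof
  interpret f: Vector_Spaces.linear "(*s)" "(*s)" f by fact
  show "f ` vec.span B \<subseteq> f ` vec.span (B - K)"
  proof
    fix z assume "z \<in> f ` vec.span B"
    then obtain x where "x \<in> vec.span ((B - K) \<union> K)" "z = f x"
      using assms(2) by (auto simp: Un_absorb2)
    then obtain c k where "x = c + k" "c \<in> vec.span (B - K)" "k \<in> vec.span K"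
      unfolding vec.span_Un by blast
    moreover have "f k = 0"
      using f.eq_0_on_span assms(3) \<open>k \<in> vec.span K\<close> by blast
    ultimately show "z \<in> f ` vec.span (B - K)"
      using \<open>z = f x\<close> by (auto simp: f.add)
  qed
  show "f ` vec.span (B - K) \<subseteq> f ` vec.span B"
    by (simp add: image_mono vec.span_mono)
qed

lemma dim_image_plus_dim_kernel:
  fixes f :: "'a::field^'n \<Rightarrow> 'a^'k"
  assumes "Vector_Spaces.linear (*s) (*s) f" and "vec.subspace S"
  shows "vec.dim (f ` S) + vec.dim {x \<in> S. f x = 0} = vec.dim S"
proof -
  interpret f: Vector_Spaces.linear "(*s)" "(*s)" f by fact
  let ?K = "{x \<in> S. f x = 0}"
  have "vec.subspace ?K"
    using assms(2) by (auto simp: vec.subspace_def f.add f.scale)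
  obtain K where K: "K \<subseteq> ?K" "vec.independent K" "?K \<subseteq> vec.span K" "card K = vec.dim ?K"
    using vec.basis_exists by blast
  obtain B where B: "K \<subseteq> B" "B \<subseteq> S" "vec.independent B" "S \<subseteq> vec.span B"
    using vec.maximal_independent_subset_extend[of K S] K assms(2) by auto
  have S_eq: "S = vec.span B"
    using B(2,4) assms(2) vec.span_minimal by blast
  have "f ` S = f ` vec.span (B - K)"
    unfolding S_eq by (rule linear_image_span_Diff[OF assms(1) B(1)]) (use K(1) in blast)
  moreover have "inj_on f (vec.span (B - K))"
  proof (rule f.inj_on_iff_eq_0[THEN iffD2, OF vec.subspace_span], intro ballI impI)
    fix x assume "x \<in> vec.span (B - K)" "f x = 0"
    moreover have "x \<in> S"
      using \<open>x \<in> vec.span (B - K)\<close> S_eq vec.span_mono by blast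
    ultimately show "x = 0"
      using vec_span_Diff_Int_span[OF B(3,1)] K(3) by blast
  qed
  ultimately have "vec.dim (f ` S) = card (B - K)"
    using vec.dim_image_eq[OF assms(1), of "vec.span (B - K)"] vec.independent_mono[OF B(3)]
    by (simp add: vec.span_span vec.dim_eq_card_independent)
  moreover have "vec.dim S = card B"
    using S_eq B(3) vec.dim_span_eq_card_independent by blast
  moreover have "card (B - K) + card K = card B"
    using B(1,3) vec.finiteI_independent
    by (metis card_Diff_subset card_mono finite_subset le_add_diff_inverse2)
  ultimately show ?thesis
    using K(4) by simp
qed

lemma dim_range_plus_dim_null_space:
  fixes N :: "'a::field^'n^'k"
  shows "vec.dim (range ((*v) N)) + vec.dim {x. N *v x = 0} = CARD('n)"
  using dim_image_plus_dim_kernel[OF matrix_vector_mul_linear_gen vec.subspace_UNIV, of N]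
  by (simp add: vec_dim_card card_cart_basis)

lemma rank_eq_dim_range_transpose:
  fixes N :: "'a::field^'m^'k"
  shows "rank N = vec.dim (range ((*v) (transpose N)))"
proof -
  have "range ((*v) (transpose N)) = vec.span (rows N)"
  proof
    show "range ((*v) (transpose N)) \<subseteq> vec.span (rows N)"
      using matrix_vector_mult_in_columnspace_gen[of "transpose N"] by auto
    have "rows N \<subseteq> range ((*v) (transpose N))"
    proof
      fix r assume "r \<in> rows N"
      then obtain i where "r = row i N"
        by (auto simp: rows_def)
      then have "r = transpose N *v axis i 1"
        by (simp add: row_def transpose_def matrix_vector_mult_def vec_eq_iff axis_def
            if_distrib[of "\<lambda>x. _ * x"] cong: if_cong)
      then show "r \<in> range ((*v) (transpose N))" by blast
    qed
    then show "vec.span (rows N) \<subseteq> range ((*v) (transpose N))"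
      by (simp add: vec.span_minimal vec.subspace_image)
  qed
  then show ?thesis
    by (simp add: row_rank_def_gen)
qed

lemma full_row_rank_transpose_eq_0:
  fixes A :: "'a::field^'m^'n"
  assumes "rank A = CARD('n)"
  shows "transpose A *v y = 0 \<longleftrightarrow> y = 0"
proof -
  have "vec.dim {x. transpose A *v x = 0} = 0"
    using dim_range_plus_dim_null_space[of "transpose A"] assms
    by (simp add: rank_eq_dim_range_transpose)
  then show ?thesis
    by auto
qed

lemma full_row_rank_surj:
  fixes A :: "'a::field^'m^'n"
  assumes "rank A = CARD('n)"
  shows "surj ((*v) A)"
  using full_row_rank_transpose_eq_0[OF assms] by (auto simp: range_matrix_vector_mult_eq)

lemma det_eq_0_imp_null_vector:
  fixes M :: "'a::field^'n^'n"
  assumes "det M = 0"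
  obtains y where "y \<noteq> 0" and "M *v y = 0"
proof -
  have "\<not> inj ((*v) M)"
    using det_nz_iff_inj_gen[OF matrix_vector_mul_linear_gen, of M] assms by simp
  then obtain x x' where "x \<noteq> x'" "M *v x = M *v x'"
    by (auto simp: inj_def)
  then show thesis
    by (intro that[of "x - x'"]) (auto simp: matrix_vector_mult_diff_distrib)
qed

section \<open>Polynomial functions and the Zariski topology\<close>

lemma poly_in_sum:
  assumes "finite I" and "\<And>i. i \<in> I \<Longrightarrow> f i \<in> poly_in C"
  shows "(\<lambda>x. \<Sum>i\<in>I. f i x) \<in> poly_in C"
  using assms
proof (induction I rule: finite_induct)
  case empty
  show ?case
    using poly_in.const[of 0 C] by simp
next
  case (insert a I)
  then have "(\<lambda>x. f a x + (\<Sum>i\<in>I. f i x)) \<in> poly_in C"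
    by (intro poly_in.add) auto
  with insert show ?case
    by simp
qed

lemma poly_in_diff:
  assumes "f \<in> poly_in C" and "g \<in> poly_in C"
  shows "(\<lambda>x. f x - g x) \<in> poly_in C"
proof -
  have "(\<lambda>x. f x + (-1) * g x) \<in> poly_in C"
    using assms by (intro poly_in.add poly_in.mult poly_in.const)
  then show ?thesis
    by simp
qed

lemma poly_in_subst:
  assumes "f \<in> poly_in C" and "\<And>c. c \<in> C \<Longrightarrow> (\<lambda>y. c (\<phi> y)) \<in> poly_in C'"
  shows "(\<lambda>y. f (\<phi> y)) \<in> poly_in C'"
  using assms(1) by induction (auto intro: poly_in.intros assms(2))

lemma poly_in_coord: "(\<lambda>x. x $ i) \<in> poly_in coords"
  by (rule poly_in.coord) (auto simp: coords_def)

lemma poly_in_fst: "(\<lambda>z. fst z $ i) \<in> poly_in coords2"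
  by (rule poly_in.coord) (auto simp: coords2_def)

lemma poly_in_snd: "(\<lambda>z. snd z $ i) \<in> poly_in coords2"
  by (rule poly_in.coord) (auto simp: coords2_def)

lemma poly_in_dot:
  assumes "\<And>j. (\<lambda>z. F z $ j) \<in> poly_in C"
  shows "(\<lambda>z. dot w (F z)) \<in> poly_in C"
  unfolding dot_def by (intro poly_in_sum poly_in.mult poly_in.const assms) simp

lemma poly_in_matrix_vector_mult:
  assumes "\<And>j. (\<lambda>z. F z $ j) \<in> poly_in C"
  shows "(\<lambda>z. (E *v F z) $ i) \<in> poly_in C"
  unfolding matrix_vector_mult_def by (simp, intro poly_in_sum poly_in.mult poly_in.const assms) simp

lemma poly_in_coords_comp:
  assumes "f \<in> poly_in coords" and "\<And>i. (\<lambda>y. \<Phi> y $ i) \<in> poly_in C"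
  shows "(\<lambda>y. f (\<Phi> y)) \<in> poly_in C"
  using assms(1) by (rule poly_in_subst) (auto simp: coords_def assms(2))

lemma poly_in_coords2_comp:
  assumes "p \<in> poly_in coords2"
    and "\<And>i. (\<lambda>y. \<Phi> y $ i) \<in> poly_in C" and "\<And>i. (\<lambda>y. \<Psi> y $ i) \<in> poly_in C"
  shows "(\<lambda>y. p (\<Phi> y, \<Psi> y)) \<in> poly_in C"
  using assms(1) by (rule poly_in_subst) (auto simp: coords2_def assms(2,3))

lemma zariski_closedI: "P \<subseteq> poly_in C \<Longrightarrow> zariski_closed C {x. \<forall>p\<in>P. p x = 0}"
  unfolding zariski_closed_def by (rule exI[of _ P]) simp

lemma zariski_closedE:
  assumes "zariski_closed C S"
  obtains P where "P \<subseteq> poly_in C" and "S = {x. \<forall>p\<in>P. p x = 0}"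
  using assms unfolding zariski_closed_def by (elim exE conjE) (rule that)

lemma zariski_closure_subset: "S \<subseteq> zariski_closure C S"
  unfolding zariski_closure_def by blast

lemma zariski_closure_minimal: "S \<subseteq> T \<Longrightarrow> zariski_closed C T \<Longrightarrow> zariski_closure C S \<subseteq> T"
  unfolding zariski_closure_def by (rule Inter_lower) simp

lemma zariski_closure_closed:
  assumes "zariski_closed C S"
  shows "zariski_closure C S = S"
  using zariski_closure_minimal[OF order.refl assms] zariski_closure_subset by (rule antisym)

lemma zariski_closed_Inter:
  assumes "\<And>T. T \<in> \<T> \<Longrightarrow> zariski_closed C T"
  shows "zariski_closed C (\<Inter>\<T>)"
proof -
  have "\<forall>T\<in>\<T>. zariski_closed C T"
    using assms by blast
  then have "\<forall>T\<in>\<T>. \<exists>P. P \<subseteq> poly_in C \<and> T = {x. \<forall>p\<in>P. p x = 0}"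
    unfolding zariski_closed_def .
  then obtain P where P: "\<forall>T\<in>\<T>. P T \<subseteq> poly_in C \<and> T = {x. \<forall>p\<in>P T. p x = 0}"
    by (rule bchoice[THEN exE])
  then have eq: "\<Inter>\<T> = {x. \<forall>p\<in>\<Union>(P ` \<T>). p x = 0}"
    by blast
  show ?thesis
    unfolding eq by (rule zariski_closedI) (use P in blast)
qed

lemma zariski_closed_closure: "zariski_closed C (zariski_closure C S)"
  unfolding zariski_closure_def by (rule zariski_closed_Inter) blast

lemma zariski_closed_vec_eq:
  assumes "\<And>i. (\<lambda>z. F z $ i) \<in> poly_in C" and "\<And>i. (\<lambda>z. G z $ i) \<in> poly_in C"
  shows "zariski_closed C {z. F z = G z}"
proof -
  have eq: "{z. F z = G z} = {z. \<forall>p\<in>{(\<lambda>z. F z $ i - G z $ i) | i. True}. p z = 0}"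
    by (auto simp: vec_eq_iff)
  show ?thesis
    unfolding eq by (rule zariski_closedI) (use assms poly_in_diff in blast)
qed

lemma zariski_closed_singleton: "zariski_closed coords {x0 :: complex^'m}"
proof -
  have "zariski_closed coords {x. x = x0}"
    by (rule zariski_closed_vec_eq) (rule poly_in_coord, rule poly_in.const)
  then show ?thesis
    by simp
qed

lemma zariski_closed_slice:
  assumes "zariski_closed coords2 Z"
  shows "zariski_closed coords {x. (x, u) \<in> Z}"
proof -
  obtain P where P: "P \<subseteq> poly_in coords2" and Z: "Z = {z. \<forall>p\<in>P. p z = 0}"
    using assms by (rule zariski_closedE)
  have "(\<lambda>x. p (x, u)) \<in> poly_in coords" if "p \<in> P" for p
  proof (rule poly_in_coords2_comp[where \<Phi> = "\<lambda>x. x" and \<Psi> = "\<lambda>_. u"])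
    show "p \<in> poly_in coords2"
      using that P by blast
  qed (auto intro: poly_in_coord poly_in.const)
  then have "zariski_closed coords {x. \<forall>q\<in>(\<lambda>p x. p (x, u)) ` P. q x = 0}"
    by (intro zariski_closedI) blast
  also have "{x. \<forall>q\<in>(\<lambda>p x. p (x, u)) ` P. q x = 0} = {x. (x, u) \<in> Z}"
    unfolding Z by auto
  finally show ?thesis .
qed

lemma poly_in_coords_along_line:
  assumes "f \<in> poly_in coords"
  shows "\<exists>q. \<forall>t. f (x0 + t *s d) = poly q t"
  using assms
proof induction
  case (const c)
  show ?case
    by (intro exI[of _ "[:c:]"]) simp
next
  case (coord f)
  then obtain i where "f = (\<lambda>x. x $ i)"
    by (auto simp: coords_def)
  then show ?case
    by (intro exI[of _ "[:x0 $ i, d $ i:]"]) (simp add: mult.commute)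
next
  case (add f g)
  then obtain q r where "\<forall>t. f (x0 + t *s d) = poly q t" "\<forall>t. g (x0 + t *s d) = poly r t"
    by blast
  then show ?case
    by (intro exI[of _ "q + r"]) simp
next
  case (mult f g)
  then obtain q r where "\<forall>t. f (x0 + t *s d) = poly q t" "\<forall>t. g (x0 + t *s d) = poly r t"
    by blast
  then show ?case
    by (intro exI[of _ "q * r"]) simp
qed

lemma finite_line_Int_zariski_closed:
  assumes "zariski_closed coords Z" and "x0 + t0 *s d \<notin> Z"
  shows "finite {t. x0 + t *s d \<in> Z}"
proof -
  obtain P where P: "P \<subseteq> poly_in coords" and Z: "Z = {x. \<forall>p\<in>P. p x = 0}"
    using assms(1) by (rule zariski_closedE)
  obtain p where p: "p \<in> P" "p (x0 + t0 *s d) \<noteq> 0"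
    using assms(2) unfolding Z by blast
  obtain q where q: "\<forall>t. p (x0 + t *s d) = poly q t"
    using poly_in_coords_along_line p(1) P by blast
  have "q \<noteq> 0"
    using q p(2) by auto
  moreover have "{t. x0 + t *s d \<in> Z} \<subseteq> {t. poly q t = 0}"
    using p(1) q unfolding Z by auto
  ultimately show ?thesis
    using poly_roots_finite finite_subset by blast
qed

text \<open>A complex line is not a union of two proper Zariski-closed subsets, since each of them
  meets the line in finitely many points.\<close>

lemma zariski_irreducible_closure_line:
  fixes x0 d :: "complex^'m"
  shows "zariski_irreducible coords (zariski_closure coords (range (\<lambda>t. x0 + t *s d)))"
    (is "zariski_irreducible coords (zariski_closure coords ?L)")
  unfolding zariski_irreducible_def
proof (intro conjI allI impI)
  show "zariski_closure coords ?L \<noteq> {}"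
    using zariski_closure_subset[of ?L coords] by blast
  fix Z1 Z2
  assume Z1: "zariski_closed coords Z1" and Z2: "zariski_closed coords Z2"
    and cover: "zariski_closure coords ?L
      = zariski_closure coords ?L \<inter> Z1 \<union> zariski_closure coords ?L \<inter> Z2"
  have "zariski_closure coords ?L \<subseteq> Z1 \<union> Z2"
  proof
    fix x assume "x \<in> zariski_closure coords ?L"
    then have "x \<in> zariski_closure coords ?L \<inter> Z1 \<union> zariski_closure coords ?L \<inter> Z2"
      by (subst cover[symmetric])
    then show "x \<in> Z1 \<union> Z2"
      by blast
  qed
  then have "{t. x0 + t *s d \<in> Z1} \<union> {t. x0 + t *s d \<in> Z2} = UNIV"
    using zariski_closure_subset[of ?L coords] by blast
  then have "infinite ({t. x0 + t *s d \<in> Z1} \<union> {t. x0 + t *s d \<in> Z2})"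
    by (simp add: infinite_UNIV_char_0)
  then have "?L \<subseteq> Z1 \<or> ?L \<subseteq> Z2"
    using finite_line_Int_zariski_closed[OF Z1] finite_line_Int_zariski_closed[OF Z2] by blast
  then show "zariski_closure coords ?L \<subseteq> Z1 \<or> zariski_closure coords ?L \<subseteq> Z2"
    using zariski_closure_minimal Z1 Z2 by blast
qed

lemma zariski_irreducible_singleton: "zariski_irreducible C {x}"
  unfolding zariski_irreducible_def
proof (intro conjI allI impI)
  fix Z1 Z2 assume cover: "{x} = {x} \<inter> Z1 \<union> {x} \<inter> Z2"
  have "x \<in> {x} \<inter> Z1 \<union> {x} \<inter> Z2"
    by (subst cover[symmetric]) simp
  then show "{x} \<subseteq> Z1 \<or> {x} \<subseteq> Z2"
    by blast
qed simp

lemma infinite_range_line: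
  fixes x0 d :: "complex^'m"
  assumes "d \<noteq> 0"
  shows "infinite (range (\<lambda>t. x0 + t *s d))"
proof
  have "inj (\<lambda>t. x0 + t *s d)"
  proof (rule injI)
    fix s t assume "x0 + s *s d = x0 + t *s d"
    then have "(s - t) *s d = 0"
      by (simp add: vec.scale_left_diff_distrib)
    then show "s = t"
      using assms by simp
  qed
  moreover assume "finite (range (\<lambda>t. x0 + t *s d))"
  ultimately show False
    using finite_imageD infinite_UNIV_char_0 by blast
qed

lemma zdim_ge_1_if_line_subset:
  fixes x0 d :: "complex^'m"
  assumes "zariski_closed coords S" and "d \<noteq> 0" and "\<And>t. x0 + t *s d \<in> S"
  shows "zdim_ge coords S 1"
proof -
  let ?L = "zariski_closure coords (range (\<lambda>t. x0 + t *s d))"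
  have "x0 + t *s d \<in> ?L" for t
    using zariski_closure_subset[of "range (\<lambda>t. x0 + t *s d)" coords] by blast
  from this[of 0] this[of 1] have "x0 \<in> ?L" "x0 + d \<in> ?L"
    by simp_all
  moreover have "x0 + d \<noteq> x0"
    using assms(2) by simp
  ultimately have "{x0} \<subset> ?L"
    by blast
  moreover have "?L \<subseteq> S"
    using assms(1,3) by (intro zariski_closure_minimal) auto
  ultimately show ?thesis
    unfolding zdim_ge_def
    using zariski_closed_singleton zariski_irreducible_singleton zariski_closed_closure
      zariski_irreducible_closure_line
    by (intro exI[of _ "\<lambda>i. if i = 0 then {x0} else ?L"]) (auto simp: le_Suc_eq)
qed

lemma zdim_ge_1_imp_two_points:
  assumes "zdim_ge C S 1"
  obtains x y where "x \<in> S" "y \<in> S" "x \<noteq> y"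
proof -
  obtain Z where Z: "\<forall>i\<le>1. zariski_closed C (Z i) \<and> zariski_irreducible C (Z i) \<and> Z i \<subseteq> S"
    and chain: "\<forall>i<1. Z i \<subset> Z (Suc i)"
    using assms unfolding zdim_ge_def by blast
  have "zariski_irreducible C (Z 0)" "Z 0 \<subseteq> S" "Z 1 \<subseteq> S"
    using Z[rule_format, of 0] Z[rule_format, of 1] by simp_all
  moreover have "Z 0 \<subset> Z 1"
    using chain by simp
  moreover have "Z 0 \<noteq> {}"
    using \<open>zariski_irreducible C (Z 0)\<close> unfolding zariski_irreducible_def by (elim conjE)
  ultimately obtain x y where "x \<in> Z 0" "y \<in> Z 1" "y \<notin> Z 0"
    by blast
  with \<open>Z 0 \<subseteq> S\<close> \<open>Z 1 \<subseteq> S\<close> show thesis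
    by (intro that[of x y]) auto
qed

lemma zero_in_max_ideal_pow: "(\<lambda>_. 0) \<in> max_ideal_pow C x k"
  by (cases k) (auto intro: poly_in.const ideal_gen.zero)

text \<open>Two polynomials are always linearly dependent modulo the maximal ideal at \<open>x\<close>.\<close>

lemma quot_dim_le_1:
  assumes "max_ideal C x \<subseteq> J"
  shows "quot_dim C J \<le> 1"
  unfolding quot_dim_def
proof (rule Sup_least, clarify)
  fix F assume fin: "finite F" and F: "F \<subseteq> poly_in C"
    and indep: "\<forall>c. (\<lambda>y. \<Sum>f\<in>F. c f * f y) \<in> J \<longrightarrow> (\<forall>f\<in>F. c f = 0)"
  show "enat (card F) \<le> 1"
  proof (rule ccontr)
    assume "\<not> enat (card F) \<le> 1"
    then obtain f g where fg: "f \<in> F" "g \<in> F" "f \<noteq> g"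
      using card_le_Suc0_iff_eq[OF fin] by (auto simp: one_enat_def)
    have "\<exists>\<alpha> \<beta>. (\<alpha> \<noteq> 0 \<or> \<beta> \<noteq> 0) \<and> \<alpha> * f x + \<beta> * g x = 0"
    proof (cases "f x = 0")
      case True
      then show ?thesis
        by (intro exI[of _ 1] exI[of _ 0]) simp
    next
      case False
      then show ?thesis
        by (intro exI[of _ "g x"] exI[of _ "- f x"]) (simp add: mult.commute)
    qed
    then obtain \<alpha> \<beta> where \<alpha>\<beta>: "\<alpha> \<noteq> 0 \<or> \<beta> \<noteq> 0" "\<alpha> * f x + \<beta> * g x = 0"
      by blast
    define c where "c h = (if h = f then \<alpha> else if h = g then \<beta> else 0)" for h
    have "(\<Sum>h\<in>F. c h * h y) = (\<Sum>h\<in>F. (if h = f then \<alpha> * f y else 0) + (if h = g then \<beta> * g y else 0))" for y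
      using fg(3) by (intro sum.cong) (auto simp: c_def)
    then have "(\<lambda>y. \<Sum>h\<in>F. c h * h y) = (\<lambda>y. \<alpha> * f y + \<beta> * g y)"
      using fin fg by (simp add: sum.distrib)
    moreover have "(\<lambda>y. \<alpha> * f y + \<beta> * g y) \<in> max_ideal C x"
      using F fg \<alpha>\<beta>(2) unfolding max_ideal_def
      by (auto intro!: poly_in.add poly_in.mult poly_in.const)
    ultimately have "c f = 0" "c g = 0"
      using indep assms fg by auto
    then show False
      using fg(3) \<alpha>\<beta>(1) by (simp add: c_def)
  qed
qed

lemma local_mult_le_1:
  assumes "max_ideal C x \<subseteq> I"
  shows "local_mult C I x \<le> 1"
  unfolding local_mult_def
proof (rule SUP_least, rule quot_dim_le_1)
  fix k
  show "max_ideal C x \<subseteq> {(\<lambda>y. f y + g y) | f g. f \<in> I \<and> g \<in> max_ideal_pow C x k}"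
  proof
    fix f assume "f \<in> max_ideal C x"
    then have "\<exists>f' g. f = (\<lambda>y. f' y + g y) \<and> f' \<in> I \<and> g \<in> max_ideal_pow C x k"
      using assms zero_in_max_ideal_pow by (intro exI[of _ f] exI[of _ "\<lambda>_. 0"]) auto
    then show "f \<in> {(\<lambda>y. f y + g y) | f g. f \<in> I \<and> g \<in> max_ideal_pow C x k}"
      by simp
  qed
qed

section \<open>The ED correspondence of an affine linear space\<close>

definition ED_incidence :: "complex^'m^'n \<Rightarrow> complex^'n \<Rightarrow> ((complex^'m) \<times> (complex^'m)) set" where
  "ED_incidence A b = {(x, u). x \<in> lin_var A b \<and> u - x \<in> range (\<lambda>y. transpose A *v y)}"

lemma ED_corr_eq_closure: "ED_corr A b = zariski_closure coords2 (ED_incidence A b)"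
  unfolding ED_corr_def ED_incidence_def ..

lemma mem_ED_incidence:
  "(x, u) \<in> ED_incidence A b \<longleftrightarrow> A *v x = b \<and> (\<exists>y. u - x = transpose A *v y)"
  by (auto simp: ED_incidence_def lin_var_def)

lemma ED_incidence_residual:
  fixes A :: "'a::comm_ring_1^'m^'n"
  assumes "A *v x = b" and "u - x = transpose A *v y"
  shows "A *v u - b = (A ** transpose A) *v y"
proof -
  have "A *v u - b = A *v (u - x)"
    using assms(1) by (simp add: matrix_vector_mult_diff_distrib)
  also have "\<dots> = (A ** transpose A) *v y"
    using assms(2) by (simp add: matrix_vector_mul_assoc)
  finally show ?thesis .
qed

lemma ED_fiberI: "(x, u) \<in> ED_incidence A b \<Longrightarrow> x \<in> ED_fiber A b u"
  unfolding ED_fiber_def ED_corr_eq_closure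
  using zariski_closure_subset[of "ED_incidence A b" coords2] by blast

lemma ED_corr_subset: "ED_incidence A b \<subseteq> T \<Longrightarrow> zariski_closed coords2 T \<Longrightarrow> ED_corr A b \<subseteq> T"
  unfolding ED_corr_eq_closure by (rule zariski_closure_minimal)

lemma zariski_closed_ED_fiber: "zariski_closed coords (ED_fiber A b u)"
  unfolding ED_fiber_def ED_corr_eq_closure by (rule zariski_closed_slice[OF zariski_closed_closure])

text \<open>If \<open>A A\<^sup>T\<close> is invertible, the only critical point for \<open>u\<close> is the orthogonal projection
  \<open>u - A\<^sup>T (A A\<^sup>T)\<^sup>-\<^sup>1 (A u - b)\<close>, which is affine in \<open>u\<close>.\<close>

lemma ED_corr_nondegenerate:
  fixes A :: "complex^'m^'n"
  assumes "invertible (A ** transpose A)"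
  obtains E e where "ED_corr A b = {z. fst z = E *v snd z + e}"
proof -
  let ?M = "A ** transpose A"
  obtain Mi where Mi: "Mi ** ?M = mat 1" "?M ** Mi = mat 1"
    using assms unfolding invertible_def by blast
  define E where "E = mat 1 - transpose A ** Mi ** A"
  define e where "e = transpose A *v (Mi *v b)"
  have proj: "E *v u + e = u - transpose A *v (Mi *v (A *v u - b))" for u
    by (simp add: E_def e_def matrix_vector_mult_diff_rdistrib matrix_vector_mult_diff_distrib
        matrix_vector_mul_assoc matrix_mul_assoc)
  have "(x, u) \<in> ED_incidence A b \<longleftrightarrow> x = E *v u + e" for x u
  proof
    assume "(x, u) \<in> ED_incidence A b"
    then obtain y where y: "A *v x = b" "u - x = transpose A *v y"
      by (auto simp: mem_ED_incidence)
    then have "Mi *v (A *v u - b) = y"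
      using ED_incidence_residual[OF y] Mi(1) by (simp add: matrix_vector_mul_assoc)
    moreover have "x = u - transpose A *v y"
      using y(2) by (simp add: algebra_simps)
    ultimately show "x = E *v u + e"
      by (simp add: proj)
  next
    assume "x = E *v u + e"
    then have x: "x = u - transpose A *v (Mi *v (A *v u - b))"
      by (simp add: proj)
    have "A *v x = A *v u - (?M ** Mi) *v (A *v u - b)"
      unfolding x by (simp add: matrix_vector_mult_diff_distrib matrix_vector_mul_assoc matrix_mul_assoc)
    then have "A *v x = b"
      by (simp add: Mi(2))
    with x show "(x, u) \<in> ED_incidence A b"
      by (auto simp: mem_ED_incidence)
  qed
  then have "ED_incidence A b = {z. fst z = E *v snd z + e}"
    by auto
  moreover have "zariski_closed coords2 {z. fst z = E *v snd z + e}"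
    by (rule zariski_closed_vec_eq, rule poly_in_fst)
      (simp, intro poly_in.add poly_in_matrix_vector_mult poly_in_snd poly_in.const)
  ultimately show thesis
    using that by (simp add: ED_corr_eq_closure zariski_closure_closed)
qed

lemma max_ideal_subset_ED_ideal_at:
  assumes corr: "ED_corr A b = {z. fst z = E *v snd z + e}"
  shows "max_ideal coords (E *v u + e) \<subseteq> ED_ideal_at A b u"
proof
  fix f assume "f \<in> max_ideal coords (E *v u + e)"
  then have f: "f \<in> poly_in coords" "f (E *v u + e) = 0"
    by (auto simp: max_ideal_def)
  define p where "p z = f (fst z) - f (E *v snd z + e)" for z
  have "p \<in> poly_in coords2"
    unfolding p_def
    by (intro poly_in_diff poly_in_coords_comp[OF f(1)] poly_in_fst)
      (simp, intro poly_in.add poly_in_matrix_vector_mult poly_in_snd poly_in.const)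
  moreover have "\<forall>z\<in>ED_corr A b. p z = 0"
    by (simp add: corr p_def)
  moreover have "f = (\<lambda>x. p (x, u))"
    using f(2) by (simp add: p_def)
  ultimately show "f \<in> ED_ideal_at A b u"
    unfolding ED_ideal_at_def by blast
qed

lemma ED_disc_nondegenerate:
  fixes A :: "complex^'m^'n"
  assumes "det (A ** transpose A) \<noteq> 0"
  shows "ED_disc A b = {}" and "ED_disc_inf A b = {}"
proof -
  obtain E e where corr: "ED_corr A b = {z. fst z = E *v snd z + e}"
    using ED_corr_nondegenerate assms invertible_det_nz by blast
  have fiber: "ED_fiber A b u = {E *v u + e}" for u
    by (auto simp: ED_fiber_def corr)
  have ideal: "max_ideal coords (E *v u + e) \<subseteq> ED_ideal_at A b u" for u
    using corr by (rule max_ideal_subset_ED_ideal_at)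
  have "local_mult coords (ED_ideal_at A b u) (E *v u + e) < 2" for u
    using local_mult_le_1[OF ideal] by (rule le_less_trans) (simp add: one_enat_def numeral_eq_enat)
  then show "ED_disc A b = {}"
    by (auto simp: ED_disc_def fiber not_le[symmetric])
  have "\<not> zdim_ge coords (ED_fiber A b u) 1" for u
  proof
    assume "zdim_ge coords (ED_fiber A b u) 1"
    then obtain x y where "x \<in> ED_fiber A b u" "y \<in> ED_fiber A b u" "x \<noteq> y"
      by (rule zdim_ge_1_imp_two_points)
    then show False
      by (simp add: fiber)
  qed
  then show "ED_disc_inf A b = {}"
    by (simp add: ED_disc_inf_def)
qed

lemma ED_corr_subset_compatible:
  fixes A :: "complex^'m^'n"
  shows "ED_corr A b \<subseteq> {z. A *v snd z - b \<in> range ((*v) (A ** transpose A))}"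
proof (rule ED_corr_subset)
  show "ED_incidence A b \<subseteq> {z. A *v snd z - b \<in> range ((*v) (A ** transpose A))}"
  proof
    fix z assume "z \<in> ED_incidence A b"
    moreover obtain x u where z: "z = (x, u)"
      by fastforce
    ultimately obtain y where "A *v x = b" "u - x = transpose A *v y"
      by (auto simp: mem_ED_incidence)
    then have "A *v u - b = (A ** transpose A) *v y"
      by (rule ED_incidence_residual)
    then show "z \<in> {z. A *v snd z - b \<in> range ((*v) (A ** transpose A))}"
      using z by simp
  qed
  let ?P = "{(\<lambda>z. dot w (A *v snd z - b)) | w. transpose (A ** transpose A) *v w = 0}"
  have eq: "{z. A *v snd z - b \<in> range ((*v) (A ** transpose A))} = {z. \<forall>p\<in>?P. p z = 0}"
    by (auto simp: range_matrix_vector_mult_eq)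
  have "?P \<subseteq> poly_in coords2"
    by (auto intro!: poly_in_dot simp del: vector_minus_component)
      (simp, intro poly_in_diff poly_in_matrix_vector_mult poly_in_snd poly_in.const)
  then show "zariski_closed coords2 {z. A *v snd z - b \<in> range ((*v) (A ** transpose A))}"
    unfolding eq by (rule zariski_closedI)
qed

lemma ED_fiber_empty_if_incompatible:
  "A *v u - b \<notin> range ((*v) (A ** transpose A)) \<Longrightarrow> ED_fiber A b u = {}"
  using ED_corr_subset_compatible[of A b] by (auto simp: ED_fiber_def)

lemma ED_fiber_contains_line:
  fixes A :: "complex^'m^'n"
  assumes "rank A = CARD('n)" and "det (A ** transpose A) = 0"
    and "A *v u - b = (A ** transpose A) *v y"
  obtains x0 d where "d \<noteq> 0" and "\<And>t. x0 + t *s d \<in> ED_fiber A b u"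
proof -
  obtain y0 where "y0 \<noteq> 0" and y0: "(A ** transpose A) *v y0 = 0"
    using det_eq_0_imp_null_vector assms(2) by blast
  define d where "d = transpose A *v y0"
  define x0 where "x0 = u - transpose A *v y"
  have "d \<noteq> 0"
    using full_row_rank_transpose_eq_0[OF assms(1)] \<open>y0 \<noteq> 0\<close> by (simp add: d_def)
  have "(x0 + t *s d, u) \<in> ED_incidence A b" for t
    unfolding mem_ED_incidence
  proof
    have "A *v (x0 + t *s d) = A *v u - (A ** transpose A) *v y + t *s ((A ** transpose A) *v y0)"
      by (simp add: x0_def d_def matrix_vector_right_distrib matrix_vector_mult_diff_distrib
          vector_scalar_commute matrix_vector_mul_assoc)
    moreover have "A *v u - (A ** transpose A) *v y = b"
      using assms(3) by (simp add: diff_eq_eq)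
    ultimately show "A *v (x0 + t *s d) = b"
      using y0 by simp
    have "u - (x0 + t *s d) = transpose A *v (y - t *s y0)"
      by (simp add: x0_def d_def matrix_vector_mult_diff_distrib vector_scalar_commute)
    then show "\<exists>y'. u - (x0 + t *s d) = transpose A *v y'"
      by blast
  qed
  then show thesis
    using that \<open>d \<noteq> 0\<close> ED_fiberI by blast
qed

lemma ED_fiber_degenerate:
  fixes A :: "complex^'m^'n"
  assumes "rank A = CARD('n)" and "det (A ** transpose A) = 0"
    and "A *v u - b \<in> range ((*v) (A ** transpose A))"
  shows "infinite (ED_fiber A b u)" and "zdim_ge coords (ED_fiber A b u) 1"
proof -
  obtain y where "A *v u - b = (A ** transpose A) *v y"
    using assms(3) by blast
  then obtain x0 d where "d \<noteq> 0" and line: "\<And>t. x0 + t *s d \<in> ED_fiber A b u"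
    using ED_fiber_contains_line[OF assms(1,2)] by blast
  then have "range (\<lambda>t. x0 + t *s d) \<subseteq> ED_fiber A b u"
    by blast
  then show "infinite (ED_fiber A b u)"
    using infinite_range_line[OF \<open>d \<noteq> 0\<close>] by (rule infinite_super)
  show "zdim_ge coords (ED_fiber A b u) 1"
    using zariski_closed_ED_fiber \<open>d \<noteq> 0\<close> line by (rule zdim_ge_1_if_line_subset)
qed

lemma ED_disc_degenerate:
  fixes A :: "complex^'m^'n"
  assumes "rank A = CARD('n)" and "det (A ** transpose A) = 0"
  shows "ED_disc A b = {u. A *v u - b \<in> range ((*v) (A ** transpose A))}"
    and "ED_disc_inf A b = {u. A *v u - b \<in> range ((*v) (A ** transpose A))}"
proof -
  have compatible: "A *v u - b \<in> range ((*v) (A ** transpose A))"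
    if "x \<in> ED_fiber A b u" for x u
    using that ED_fiber_empty_if_incompatible by blast
  show "ED_disc A b = {u. A *v u - b \<in> range ((*v) (A ** transpose A))}"
  proof (intro set_eqI iffI)
    fix u assume "u \<in> ED_disc A b"
    then obtain x where "x \<in> ED_fiber A b u"
      unfolding ED_disc_def by (auto dest: infinite_imp_nonempty)
    then show "u \<in> {u. A *v u - b \<in> range ((*v) (A ** transpose A))}"
      using compatible by blast
  next
    fix u assume "u \<in> {u. A *v u - b \<in> range ((*v) (A ** transpose A))}"
    then show "u \<in> ED_disc A b"
      using ED_fiber_degenerate[OF assms] unfolding ED_disc_def by simp
  qed
  show "ED_disc_inf A b = {u. A *v u - b \<in> range ((*v) (A ** transpose A))}"
  proof (intro set_eqI iffI)
    fix u assume "u \<in> ED_disc_inf A b"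
    then have "zdim_ge coords (ED_fiber A b u) 1"
      by (simp add: ED_disc_inf_def)
    then obtain x y where "x \<in> ED_fiber A b u" "y \<in> ED_fiber A b u" "x \<noteq> y"
      by (rule zdim_ge_1_imp_two_points)
    then show "u \<in> {u. A *v u - b \<in> range ((*v) (A ** transpose A))}"
      using compatible by blast
  next
    fix u assume "u \<in> {u. A *v u - b \<in> range ((*v) (A ** transpose A))}"
    then show "u \<in> ED_disc_inf A b"
      using ED_fiber_degenerate[OF assms] unfolding ED_disc_inf_def by simp
  qed
qed

lemma differences_affine_preimage:
  fixes A :: "'a::field^'m^'n"
  assumes "A *v x0 = b" and "vec.subspace V"
  shows "{v - w | v w. v \<in> {u. A *v u - b \<in> V} \<and> w \<in> {u. A *v u - b \<in> V}} = {x. A *v x \<in> V}"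
proof (intro set_eqI iffI)
  fix x assume "x \<in> {v - w | v w. v \<in> {u. A *v u - b \<in> V} \<and> w \<in> {u. A *v u - b \<in> V}}"
  then obtain v w where "x = v - w" "A *v v - b \<in> V" "A *v w - b \<in> V"
    by blast
  then have "(A *v v - b) - (A *v w - b) \<in> V"
    using assms(2) vec.subspace_diff by blast
  then show "x \<in> {x. A *v x \<in> V}"
    using \<open>x = v - w\<close> by (simp add: matrix_vector_mult_diff_distrib)
next
  fix x assume "x \<in> {x. A *v x \<in> V}"
  then have "A *v (x + x0) - b \<in> V" "A *v x0 - b \<in> V"
    using assms by (simp_all add: matrix_vector_right_distrib vec.subspace_0)
  then show "x \<in> {v - w | v w. v \<in> {u. A *v u - b \<in> V} \<and> w \<in> {u. A *v u - b \<in> V}}"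
    by (intro CollectI exI[of _ "x + x0"] exI[of _ x0]) simp
qed

lemma dim_preimage:
  fixes A :: "'a::field^'m^'n"
  assumes "surj ((*v) A)" and "vec.subspace V"
  shows "vec.dim {x. A *v x \<in> V} = vec.dim V + vec.dim {x. A *v x = 0}"
proof -
  have "vec.subspace {x. A *v x \<in> V}"
    using vec.subspace_vimage[OF assms(2)] by (simp add: vimage_def)
  moreover have "(*v) A ` {x. A *v x \<in> V} = V"
    using assms(1) by (auto simp: surj_def image_iff)
  moreover have "{x \<in> {x. A *v x \<in> V}. A *v x = 0} = {x. A *v x = 0}"
    using vec.subspace_0[OF assms(2)] by auto
  ultimately show ?thesis
    using dim_image_plus_dim_kernel[OF matrix_vector_mul_linear_gen, of "{x. A *v x \<in> V}" A]
    by simp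
qed

lemma dim_compatible_differences:
  fixes A :: "complex^'m^'n" and b :: "complex^'n"
  assumes "rank A = CARD('n)"
  defines "R \<equiv> {u. A *v u - b \<in> range ((*v) (A ** transpose A))}"
  shows "vec.dim {v - w | v w. v \<in> R \<and> w \<in> R} = CARD('m) - CARD('n) + rank (A ** transpose A)"
proof -
  let ?M = "A ** transpose A"
  have surj: "surj ((*v) A)"
    using full_row_rank_surj[OF assms(1)] .
  then obtain x0 where "A *v x0 = b"
    by (metis surj_def)
  have "vec.dim (range ((*v) A)) = CARD('n)"
    using surj by (simp add: vec_dim_card card_cart_basis)
  then have "vec.dim {x. A *v x = 0} = CARD('m) - CARD('n)"
    using dim_range_plus_dim_null_space[of A] by simp
  moreover have "rank ?M = vec.dim (range ((*v) ?M))"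
    using rank_eq_dim_range_transpose[of ?M] by (simp add: matrix_transpose_mul)
  moreover have "{v - w | v w. v \<in> R \<and> w \<in> R} = {x. A *v x \<in> range ((*v) ?M)}"
    unfolding R_def using \<open>A *v x0 = b\<close> by (rule differences_affine_preimage) (simp add: vec.subspace_image)
  ultimately show ?thesis
    using dim_preimage[OF surj, of "range ((*v) ?M)"] by (simp add: vec.subspace_image)
qed

theorem mainTheorem6:
  fixes A :: "complex^'m^'n" and b :: "complex^'n"
  assumes "rank A = CARD('n)" and "CARD('n) \<le> CARD('m)"
  shows "ED_disc A b = ED_disc_inf A b
    \<and> (ED_disc A b \<noteq> {} \<longleftrightarrow> det (A ** transpose A) = 0)
    \<and> (det (A ** transpose A) = 0 \<longrightarrow>
         ED_disc A b = {u. A *v u - b \<in> range (\<lambda>y. (A ** transpose A) *v y)}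
       \<and> vec.dim {v - w | v w. v \<in> ED_disc A b \<and> w \<in> ED_disc A b}
           = CARD('m) - CARD('n) + rank (A ** transpose A))"
proof (cases "det (A ** transpose A) = 0")
  case True
  note disc = ED_disc_degenerate[OF assms(1) True]
  obtain x0 where "A *v x0 = b"
    using full_row_rank_surj[OF assms(1)] by (metis surj_def)
  then have "x0 \<in> ED_disc A b"
    unfolding disc by (auto intro: range_eqI[of _ _ 0])
  then have "ED_disc A b \<noteq> {}"
    by blast
  with True show ?thesis
    using dim_compatible_differences[OF assms(1)] by (simp add: disc)
next
  case False
  then show ?thesis
    using ED_disc_nondegenerate[OF False] by simp
qed

end
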